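(* Let $K$ be an $\mathcal R$-dioid, $n\in\mathbb N$, $X\in(Z_{C_2'}K)^{n\times n}$, $U\in\{0,b,p\}^{n\times n}$ and $V\in\{0,d,q\}^{n\times n}$. In $\mathrm{Mat}_{n\times n}(K\otimes_{\mathcal R}C_2')$, the inequation \[ y\ge (UyV+X)^* \] has a least solution, namely $N:=b(Up+X+qV)^*d$, and $N\in(Z_{C_2'}K)^{n\times n}$.
   Context: An $\mathcal R$-dioid is a dioid in which every regular subset of the multiplicative monoid has a supremum $\sum A$ with $\sum(AB)=(\sum A)(\sum B)$; equivalently a $*$-continuous Kleene algebra. An $\mathcal R$-congruence is a semiring congruence such that regular sets with equal downward closures modulo it have congruent suprema. $C_2'=\mathcal R\Delta_2^*/\rho$ where $\Delta_2=\{b,p,d,q\}$, $\mathcal R\Delta_2^*$ is the algebra of regular languages over $\Delta_2$, and $\rho$ the least $\mathcal R$-congruence containing $bd=pq=1$, $bq=pd=0$. $K\otimes_{\mathcal R}C_2'$ is the tensor product of $\mathcal R$-dioids (universal $\mathcal R$-dioid with $\mathcal R$-morphisms from $K$ and $C_2'$ whose images commute elementwise); elements of $K,C_2'$ are identified with their images. $Z_{C_2'}K$ is the set of elements of $K\otimes_{\mathcal R}C_2'$ commuting with all elements of $C_2'$. Matrices carry matrix sum, product and standard matrix star; when $b,d,p,q$ are multiplied with $n\times n$ matrices they are identified with the corresponding diagonal matrices. *)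

theory Defs
  imports Main
begin

inductive_set mon_star :: "('a \<Rightarrow> 'a \<Rightarrow> 'a) \<Rightarrow> 'a \<Rightarrow> 'a set \<Rightarrow> 'a set"
  for mul :: "'a \<Rightarrow> 'a \<Rightarrow> 'a" and one :: 'a and A :: "'a set" where
  one: "one \<in> mon_star mul one A"
| step: "a \<in> A \<Longrightarrow> x \<in> mon_star mul one A \<Longrightarrow> mul a x \<in> mon_star mul one A"

definition set_prod :: "('a \<Rightarrow> 'a \<Rightarrow> 'a) \<Rightarrow> 'a set \<Rightarrow> 'a set \<Rightarrow> 'a set" where
  "set_prod mul A B = {mul a b | a b. a \<in> A \<and> b \<in> B}"

inductive_set ratset :: "('a \<Rightarrow> 'a \<Rightarrow> 'a) \<Rightarrow> 'a \<Rightarrow> 'a set set"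
  for mul :: "'a \<Rightarrow> 'a \<Rightarrow> 'a" and one :: 'a where
  fin: "finite A \<Longrightarrow> A \<in> ratset mul one"
| union: "A \<in> ratset mul one \<Longrightarrow> B \<in> ratset mul one \<Longrightarrow> A \<union> B \<in> ratset mul one"
| prod: "A \<in> ratset mul one \<Longrightarrow> B \<in> ratset mul one \<Longrightarrow> set_prod mul A B \<in> ratset mul one"
| star: "A \<in> ratset mul one \<Longrightarrow> mon_star mul one A \<in> ratset mul one"

class dioid = semiring_0 + monoid_mult +
  assumes add_idem: "x + x = x"

context dioid
begin

definition dle :: "'a \<Rightarrow> 'a \<Rightarrow> bool" where
  "dle x y \<longleftrightarrow> x + y = y"

definition is_dsup :: "'a set \<Rightarrow> 'a \<Rightarrow> bool" where
  "is_dsup A s \<longleftrightarrow> (\<forall>a\<in>A. dle a s) \<and> (\<forall>u. (\<forall>a\<in>A. dle a u) \<longrightarrow> dle s u)"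

definition dsup :: "'a set \<Rightarrow> 'a" where
  "dsup A = (THE s. is_dsup A s)"

end

class R_dioid = dioid +
  assumes rat_sup_ex: "(A :: 'a set) \<in> ratset (*) 1 \<Longrightarrow> \<exists>s. is_dsup A s"
  and rat_sup_mult: "(A :: 'a set) \<in> ratset (*) 1 \<Longrightarrow> B \<in> ratset (*) 1 \<Longrightarrow>
       dsup (set_prod (*) A B) = dsup A * dsup B"

definition dstar :: "'a::R_dioid \<Rightarrow> 'a" where
  "dstar x = dsup (range (\<lambda>k. x ^ k))"

definition R_morph :: "('a::R_dioid \<Rightarrow> 'b::R_dioid) \<Rightarrow> bool" where
  "R_morph f \<longleftrightarrow> f 0 = 0 \<and> f 1 = 1 \<and> (\<forall>x y. f (x + y) = f x + f y)
     \<and> (\<forall>x y. f (x * y) = f x * f y)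
     \<and> (\<forall>A \<in> ratset (*) 1. f (dsup A) = dsup (f ` A))"

datatype delta2 = B | P | D | Q

type_synonym lang = "delta2 list set"

definition lconc :: "lang \<Rightarrow> lang \<Rightarrow> lang" where
  "lconc A C = {u @ v | u v. u \<in> A \<and> v \<in> C}"

definition RegLang :: "lang set" where
  "RegLang = ratset (@) []"

definition RegSub :: "lang set set" where
  "RegSub = {\<A>. \<A> \<in> ratset lconc {[]} \<and> \<A> \<subseteq> RegLang}"

text \<open>Downward closure of a set of regular languages modulo theta (as a set of classes).\<close>
definition downcl :: "(lang \<times> lang) set \<Rightarrow> lang set \<Rightarrow> lang set set" where
  "downcl \<theta> \<A> = {\<theta> `` {y} | y. y \<in> RegLang \<and> (\<exists>a\<in>\<A>. (y \<union> a, a) \<in> \<theta>)}"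

definition R_cong :: "(lang \<times> lang) set \<Rightarrow> bool" where
  "R_cong \<theta> \<longleftrightarrow> equiv RegLang \<theta>
     \<and> (\<forall>A A' C C'. (A, A') \<in> \<theta> \<longrightarrow> (C, C') \<in> \<theta> \<longrightarrow>
           (A \<union> C, A' \<union> C') \<in> \<theta> \<and> (lconc A C, lconc A' C') \<in> \<theta>)
     \<and> (\<forall>\<A> \<B>. \<A> \<in> RegSub \<longrightarrow> \<B> \<in> RegSub \<longrightarrow> downcl \<theta> \<A> = downcl \<theta> \<B> \<longrightarrow>
           (\<Union>\<A>, \<Union>\<B>) \<in> \<theta>)"

definition C2_gens :: "(lang \<times> lang) set" where
  "C2_gens = {({[B, D]}, {[]}), ({[P, Q]}, {[]}), ({[B, Q]}, {}), ({[P, D]}, {})}"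

definition rho :: "(lang \<times> lang) set" where
  "rho = \<Inter> {\<theta>. R_cong \<theta> \<and> C2_gens \<subseteq> \<theta>}"

text \<open>An R-morphism from C2' = R Delta_2^* / rho into an R-dioid, represented by the
  induced R-morphism g on the regular languages whose kernel contains rho.\<close>
definition C2_morph :: "(lang \<Rightarrow> 'b::R_dioid) \<Rightarrow> bool" where
  "C2_morph g \<longleftrightarrow> g {} = 0 \<and> g {[]} = 1
     \<and> (\<forall>A\<in>RegLang. \<forall>C\<in>RegLang. g (A \<union> C) = g A + g C \<and> g (lconc A C) = g A * g C)
     \<and> (\<forall>\<A>\<in>RegSub. g (\<Union>\<A>) = dsup (g ` \<A>))
     \<and> (\<forall>A C. (A, C) \<in> rho \<longrightarrow> g A = g C)"

definition commuting :: "('k \<Rightarrow> 'a::times) \<Rightarrow> (lang \<Rightarrow> 'a) \<Rightarrow> bool" where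
  "commuting f g \<longleftrightarrow> (\<forall>x. \<forall>A\<in>RegLang. f x * g A = g A * f x)"

text \<open>iK, iC exhibit the R-dioid 'l as tensor product of K and C2' (universal property,
  tested against target R-dioids of type 'm).\<close>
definition is_R_tensor :: "'m::R_dioid itself \<Rightarrow> ('k::R_dioid \<Rightarrow> 'l::R_dioid) \<Rightarrow> (lang \<Rightarrow> 'l) \<Rightarrow> bool" where
  "is_R_tensor _ iK iC \<longleftrightarrow> R_morph iK \<and> C2_morph iC \<and> commuting iK iC
     \<and> (\<forall>(f :: 'k \<Rightarrow> 'm) g. R_morph f \<and> C2_morph g \<and> commuting f g \<longrightarrow>
          (\<exists>!h. R_morph h \<and> (\<forall>x. h (iK x) = f x) \<and> (\<forall>A\<in>RegLang. h (iC A) = g A)))"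

definition ZC :: "(lang \<Rightarrow> 'l::R_dioid) \<Rightarrow> 'l set" where
  "ZC iC = {x. \<forall>A\<in>RegLang. x * iC A = iC A * x}"

section \<open>n x n matrices (entries with indices < n are relevant)\<close>

type_synonym 'a mat = "nat \<Rightarrow> nat \<Rightarrow> 'a"

definition madd :: "'a::dioid mat \<Rightarrow> 'a mat \<Rightarrow> 'a mat" where
  "madd M N = (\<lambda>i j. M i j + N i j)"

definition mmul :: "nat \<Rightarrow> 'a::{times,comm_monoid_add} mat \<Rightarrow> 'a mat \<Rightarrow> 'a mat" where
  "mmul n M N = (\<lambda>i j. \<Sum>k<n. M i k * N k j)"

definition lscal :: "'a::times \<Rightarrow> 'a mat \<Rightarrow> 'a mat" where
  "lscal c M = (\<lambda>i j. c * M i j)"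

definition rscal :: "'a::times mat \<Rightarrow> 'a \<Rightarrow> 'a mat" where
  "rscal M c = (\<lambda>i j. M i j * c)"

definition mle :: "nat \<Rightarrow> 'a::dioid mat \<Rightarrow> 'a mat \<Rightarrow> bool" where
  "mle n M N \<longleftrightarrow> (\<forall>i<n. \<forall>j<n. dle (M i j) (N i j))"

text \<open>Standard (Conway) matrix star, splitting off the last row/column:
  for M = [[A, b], [c, e]], F = A + b e* c, and
  M* = [[F*, F* b e*], [e* c F*, e* + e* c F* b e*]].\<close>
fun mstar :: "nat \<Rightarrow> 'a::R_dioid mat \<Rightarrow> 'a mat" where
  "mstar 0 M = (\<lambda>i j. 0)"
| "mstar (Suc n) M =
    (let es = dstar (M n n);
         F = (\<lambda>i j. M i j + M i n * es * M n j);
         Fs = mstar n F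
     in (\<lambda>i j. if i < n \<and> j < n then Fs i j
              else if i < n \<and> j = n then (\<Sum>k<n. Fs i k * M k n) * es
              else if i = n \<and> j < n then es * (\<Sum>k<n. M n k * Fs k j)
              else if i = n \<and> j = n then es + es * (\<Sum>k<n. \<Sum>l<n. M n k * Fs k l * M l n) * es
              else 0))"

end

theory Submission
  imports Defs
begin

(* Write M = U p + X + q V.  Kleene's theorem for the Conway star, which needs
   *-continuity, makes the entry (i, j) of M* the supremum of the labels of the paths from
   i to j in the graph whose edges carry the letters U i k * p, X i k and q * V i k.
   Reading U p as an opening and q V as a closing bracket, every such label consists of
   balanced words, separated first by unmatched closing and then by unmatched opening
   brackets.  Balanced words lie in Z, so bq = pd = 0 makes b w d vanish as soon as w has
   an unmatched bracket, while bd = pq = 1 gives b w d = w for balanced w.  Hence N i j is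
   the supremum of the balanced words from i to j.  These are generated by 1, X i k * x and
   U i k * p * u * q * V l m * x = U i k * u * V l m * x with u, x balanced: this makes N
   closed under left multiplication by X and by U N V, so (U N V + X)* <= N by star
   induction, and it puts N below every solution y by unfolding (U y V + X)*. *)

context dioid begin

lemma dle_refl [simp]: "dle x x"
  by (simp add: dle_def add_idem)

lemma dle_antisym: "dle x y \<Longrightarrow> dle y x \<Longrightarrow> x = y"
  by (metis dle_def add.commute)

lemma dle_trans [trans]: "dle x y \<Longrightarrow> dle y z \<Longrightarrow> dle x z"
  by (metis dle_def add.assoc)

lemma dle_zero [simp]: "dle 0 x"
  by (simp add: dle_def)

lemma dle_add_iff: "dle (x + y) z \<longleftrightarrow> dle x z \<and> dle y z"
  unfolding dle_def by (metis add.assoc add.commute add_idem)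

lemma dle_add1: "dle x (x + y)"
  by (metis dle_add_iff dle_refl)

lemma dle_add2: "dle y (x + y)"
  by (metis dle_add_iff dle_refl)

lemma dle_mult_left: "dle x y \<Longrightarrow> dle (c * x) (c * y)"
  unfolding dle_def by (metis distrib_left)

lemma dle_mult_right: "dle x y \<Longrightarrow> dle (x * c) (y * c)"
  unfolding dle_def by (metis distrib_right)

lemma dle_mult: "dle x y \<Longrightarrow> dle u v \<Longrightarrow> dle (x * u) (y * v)"
  by (meson dle_mult_left dle_mult_right dle_trans)

lemma dle_sum_iff: "finite K \<Longrightarrow> dle (\<Sum>k\<in>K. f k) z \<longleftrightarrow> (\<forall>k\<in>K. dle (f k) z)"
  by (induction K rule: finite_induct) (auto simp: dle_add_iff)

lemma dle_sum: "finite K \<Longrightarrow> k \<in> K \<Longrightarrow> dle (f k) (\<Sum>k\<in>K. f k)"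
  using dle_sum_iff[of K f "\<Sum>k\<in>K. f k"] by simp

lemma is_dsup_unique: "is_dsup A s \<Longrightarrow> is_dsup A t \<Longrightarrow> s = t"
  unfolding is_dsup_def by (meson dle_antisym)

lemma dsup_eq_if_is_dsup: "is_dsup A s \<Longrightarrow> dsup A = s"
  unfolding dsup_def using is_dsup_unique by blast

lemma dsup_empty [simp]: "dsup {} = 0"
  by (rule dsup_eq_if_is_dsup) (simp add: is_dsup_def)

lemma dsup_singleton [simp]: "dsup {a} = a"
  by (rule dsup_eq_if_is_dsup) (simp add: is_dsup_def)

end

lemma singleton_ratset [simp]: "{a} \<in> ratset mul one"
  by (simp add: ratset.fin)

lemma set_prodI: "a \<in> A \<Longrightarrow> c \<in> C \<Longrightarrow> a * c \<in> set_prod (*) A C"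
  unfolding set_prod_def by blast

lemma set_prodE:
  "x \<in> set_prod (*) A C \<Longrightarrow> (\<And>a c. x = a * c \<Longrightarrow> a \<in> A \<Longrightarrow> c \<in> C \<Longrightarrow> thesis) \<Longrightarrow> thesis"
  unfolding set_prod_def by blast

context R_dioid begin

lemma is_dsup_dsup: "A \<in> ratset (*) 1 \<Longrightarrow> is_dsup A (dsup A)"
  using rat_sup_ex dsup_eq_if_is_dsup by blast

lemma dsup_upper: "A \<in> ratset (*) 1 \<Longrightarrow> a \<in> A \<Longrightarrow> dle a (dsup A)"
  using is_dsup_dsup is_dsup_def by blast

lemma dsup_least: "A \<in> ratset (*) 1 \<Longrightarrow> (\<And>a. a \<in> A \<Longrightarrow> dle a u) \<Longrightarrow> dle (dsup A) u"
  using is_dsup_dsup is_dsup_def by blast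

lemma dsup_eqI:
  "A \<in> ratset (*) 1 \<Longrightarrow> (\<And>a. a \<in> A \<Longrightarrow> dle a s) \<Longrightarrow>
    (\<And>u. (\<And>a. a \<in> A \<Longrightarrow> dle a u) \<Longrightarrow> dle s u) \<Longrightarrow> dsup A = s"
  by (meson dle_antisym dsup_least dsup_upper)

lemma dsup_union:
  assumes "A \<in> ratset (*) 1" "C \<in> ratset (*) 1"
  shows "dsup (A \<union> C) = dsup A + dsup C"
proof (rule dsup_eqI)
  show "A \<union> C \<in> ratset (*) 1" using assms by (rule ratset.union)
  show "dle a (dsup A + dsup C)" if "a \<in> A \<union> C" for a
    using that assms dsup_upper dle_add_iff dle_refl dle_trans by blast
  show "dle (dsup A + dsup C) u" if "\<And>a. a \<in> A \<union> C \<Longrightarrow> dle a u" for u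
    using that assms by (simp add: dle_add_iff dsup_least)
qed

lemma dsup_insert: "A \<in> ratset (*) 1 \<Longrightarrow> dsup (insert a A) = a + dsup A"
  using dsup_union[of "{a}" A] by simp

lemma ratset_UN:
  fixes n :: nat
  shows "(\<And>k. k < n \<Longrightarrow> A k \<in> ratset (*) 1) \<Longrightarrow> (\<Union>k<n. A k) \<in> ratset (*) 1"
  by (induction n) (auto simp: lessThan_Suc intro: ratset.fin ratset.union)

lemma dsup_UN:
  fixes n :: nat
  shows "(\<And>k. k < n \<Longrightarrow> A k \<in> ratset (*) 1) \<Longrightarrow> dsup (\<Union>k<n. A k) = (\<Sum>k<n. dsup (A k))"
  by (induction n) (simp_all add: lessThan_Suc dsup_union ratset_UN add.commute)

lemma mult_dsup_le:
  assumes A: "A \<in> ratset (*) 1" and le: "\<And>x. x \<in> A \<Longrightarrow> dle (a * x * c) z"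
  shows "dle (a * dsup A * c) z"
proof -
  let ?S = "set_prod (*) (set_prod (*) {a} A) {c}"
  have S: "?S \<in> ratset (*) 1"
    using A by (intro ratset.prod) auto
  have "a * dsup A * c = dsup ?S"
    using A by (simp add: rat_sup_mult ratset.prod)
  also have "dle \<dots> z"
    using S by (rule dsup_least) (auto simp: set_prod_def le)
  finally show ?thesis .
qed

lemma dsup_commute:
  assumes A: "A \<in> ratset (*) 1" and comm: "\<And>x. x \<in> A \<Longrightarrow> x * c = c * x"
  shows "dsup A * c = c * dsup A"
proof -
  have "dsup A * c = dsup (set_prod (*) A {c})"
    using rat_sup_mult[OF A singleton_ratset] by simp
  also have "set_prod (*) A {c} = set_prod (*) {c} A"
    unfolding set_prod_def using comm by force
  also have "dsup \<dots> = c * dsup A"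
    using rat_sup_mult[OF singleton_ratset A] by simp
  finally show ?thesis .
qed

end

fun set_pow :: "'a::monoid_mult set \<Rightarrow> nat \<Rightarrow> 'a set" where
  "set_pow A 0 = {1}"
| "set_pow A (Suc k) = set_prod (*) A (set_pow A k)"

lemma mon_star_eq_UN_set_pow: "mon_star (*) 1 A = (\<Union>k. set_pow A k)"
proof (intro equalityI subsetI)
  fix x assume "x \<in> mon_star (*) 1 A"
  then show "x \<in> (\<Union>k. set_pow A k)"
  proof induction
    case one
    then show ?case by (metis UNIV_I UN_I set_pow.simps(1) singletonI)
  next
    case (step a x)
    then obtain k where "x \<in> set_pow A k" by auto
    with step have "a * x \<in> set_pow A (Suc k)" by (auto simp: set_prod_def)
    then show ?case by blast
  qed
next
  have "x \<in> set_pow A k \<Longrightarrow> x \<in> mon_star (*) 1 A" for x k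
    by (induction k arbitrary: x) (auto simp: set_prod_def intro: mon_star.intros)
  then show "x \<in> (\<Union>k. set_pow A k) \<Longrightarrow> x \<in> mon_star (*) 1 A" for x by blast
qed

lemma set_pow_ratset: "A \<in> ratset (*) 1 \<Longrightarrow> set_pow A k \<in> ratset (*) 1"
  by (induction k) (auto intro: ratset.prod)

lemma dsup_set_pow: "(A :: 'a::R_dioid set) \<in> ratset (*) 1 \<Longrightarrow> dsup (set_pow A k) = dsup A ^ k"
  by (induction k) (simp_all add: rat_sup_mult set_pow_ratset)

lemma dsup_mon_star:
  fixes A :: "'a::R_dioid set"
  assumes A: "A \<in> ratset (*) 1"
  shows "dsup (mon_star (*) 1 A) = dstar (dsup A)"
  unfolding dstar_def
proof (rule dsup_eqI)
  let ?s = "dsup A"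
  have "set_pow {?s} k = {?s ^ k}" for k
    by (induction k) (auto simp: set_prod_def)
  then have "range (\<lambda>k. ?s ^ k) = mon_star (*) 1 {?s}"
    by (auto simp: mon_star_eq_UN_set_pow)
  then have R: "range (\<lambda>k. ?s ^ k) \<in> ratset (*) 1"
    by (simp add: ratset.star)
  show "mon_star (*) 1 A \<in> ratset (*) 1"
    using A by (rule ratset.star)
  show "dle a (dsup (range (\<lambda>k. ?s ^ k)))" if "a \<in> mon_star (*) 1 A" for a
  proof -
    from that obtain k where "a \<in> set_pow A k" by (auto simp: mon_star_eq_UN_set_pow)
    then have "dle a (?s ^ k)"
      using A dsup_upper dsup_set_pow set_pow_ratset by metis
    then show ?thesis
      using R dsup_upper dle_trans by blast
  qed
  show "dle (dsup (range (\<lambda>k. ?s ^ k))) u" if "\<And>a. a \<in> mon_star (*) 1 A \<Longrightarrow> dle a u" for u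
  proof (rule dsup_least[OF R])
    fix a assume "a \<in> range (\<lambda>k. ?s ^ k)"
    then obtain k where "a = dsup (set_pow A k)"
      using A dsup_set_pow by (metis rangeE)
    then show "dle a u"
      using that A by (auto intro!: dsup_least set_pow_ratset simp: mon_star_eq_UN_set_pow)
  qed
qed

inductive path_label :: "nat \<Rightarrow> 'a::monoid_mult set mat \<Rightarrow> nat \<Rightarrow> nat \<Rightarrow> 'a \<Rightarrow> bool"
  for n :: nat and M :: "'a set mat" where
  nil: "i < n \<Longrightarrow> path_label n M i i 1"
| cons: "i < n \<Longrightarrow> k < n \<Longrightarrow> m \<in> M i k \<Longrightarrow> path_label n M k j w \<Longrightarrow> path_label n M i j (m * w)"

definition path_labels :: "nat \<Rightarrow> 'a::monoid_mult set mat \<Rightarrow> nat \<Rightarrow> nat \<Rightarrow> 'a set" where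
  "path_labels n M i j = {w. path_label n M i j w}"

lemma path_label_idx: "path_label n M i j w \<Longrightarrow> i < n \<and> j < n"
  by (induction rule: path_label.induct) auto

lemma path_label_append: "path_label n M i k u \<Longrightarrow> path_label n M k j w \<Longrightarrow> path_label n M i j (u * w)"
  by (induction rule: path_label.induct) (auto simp: mult.assoc intro: path_label.cons)

lemma path_label_edge: "i < n \<Longrightarrow> k < n \<Longrightarrow> m \<in> M i k \<Longrightarrow> path_label n M i k m"
  using path_label.cons[OF _ _ _ path_label.nil, of i n k m M] by simp

text \<open>A path on the vertices \<open>0..n\<close> splits at its visits to the last vertex \<open>n\<close>; the four
  resulting sets of labels mirror the four blocks in the definition of \<open>mstar (Suc n)\<close>, and
  \<open>bypass\<close> records the detours through \<open>n\<close> between two lower vertices.\<close>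

definition loops :: "nat \<Rightarrow> 'a::monoid_mult set mat \<Rightarrow> 'a set" where
  "loops n M = mon_star (*) 1 (M n n)"

definition bypass :: "nat \<Rightarrow> 'a::monoid_mult set mat \<Rightarrow> 'a set mat" where
  "bypass n M i j = M i j \<union> set_prod (*) (set_prod (*) (M i n) (loops n M)) (M n j)"

definition into_last :: "nat \<Rightarrow> 'a::monoid_mult set mat \<Rightarrow> nat \<Rightarrow> 'a set" where
  "into_last n M i =
    set_prod (*) (\<Union>k<n. set_prod (*) (path_labels n (bypass n M) i k) (M k n)) (loops n M)"

definition out_of_last :: "nat \<Rightarrow> 'a::monoid_mult set mat \<Rightarrow> nat \<Rightarrow> 'a set" where
  "out_of_last n M j =
    set_prod (*) (loops n M) (\<Union>k<n. set_prod (*) (M n k) (path_labels n (bypass n M) k j))"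

definition last_to_last :: "nat \<Rightarrow> 'a::monoid_mult set mat \<Rightarrow> 'a set" where
  "last_to_last n M = loops n M \<union> set_prod (*) (set_prod (*) (loops n M)
    (\<Union>k<n. \<Union>l<n. set_prod (*) (set_prod (*) (M n k) (path_labels n (bypass n M) k l)) (M l n)))
    (loops n M)"

lemma path_label_loops: "e \<in> loops n M \<Longrightarrow> path_label (Suc n) M n n e"
  unfolding loops_def
  by (induction rule: mon_star.induct) (auto intro: path_label.nil path_label.cons)

lemma path_label_bypass: "path_label n (bypass n M) i j w \<Longrightarrow> path_label (Suc n) M i j w"
proof (induction rule: path_label.induct)
  case (nil i)
  then show ?case by (auto intro: path_label.nil)
next
  case (cons i k m j w)
  have "path_label (Suc n) M i k m"
    using cons.hyps(3) unfolding bypass_def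
  proof (elim UnE set_prodE)
    show "m \<in> M i k \<Longrightarrow> ?thesis"
      using cons by (intro path_label_edge) auto
    fix a c m1 e
    assume "m = a * c" "a = m1 * e" "m1 \<in> M i n" "e \<in> loops n M" "c \<in> M n k"
    then show ?thesis
      using cons path_label_edge[of _ "Suc n"] path_label_loops path_label_append
      by (metis lessI less_SucI)
  qed
  then show ?case
    using cons path_label_append by blast
qed

lemma into_last_path_label: "w \<in> into_last n M i \<Longrightarrow> path_label (Suc n) M i n w"
  unfolding into_last_def path_labels_def
proof (elim set_prodE UN_E)
  fix a e k u m
  assume "w = a * e" "e \<in> loops n M" "k \<in> {..<n}" "a = u * m"
    "u \<in> Collect (path_label n (bypass n M) i k)" "m \<in> M k n"
  then show ?thesis
    using path_label_bypass path_label_edge[of k "Suc n" n m M] path_label_loops path_label_append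
    by (metis lessI lessThan_iff less_SucI mem_Collect_eq)
qed

lemma out_of_last_path_label: "w \<in> out_of_last n M j \<Longrightarrow> path_label (Suc n) M n j w"
  unfolding out_of_last_def path_labels_def
proof (elim set_prodE UN_E)
  fix e c k m u
  assume "w = e * c" "e \<in> loops n M" "k \<in> {..<n}" "c = m * u"
    "u \<in> Collect (path_label n (bypass n M) k j)" "m \<in> M n k"
  then show ?thesis
    using path_label_bypass path_label_edge[of n "Suc n" k m M] path_label_loops path_label_append
    by (metis lessI lessThan_iff less_SucI mem_Collect_eq)
qed

lemma last_to_last_path_label: "w \<in> last_to_last n M \<Longrightarrow> path_label (Suc n) M n n w"
  unfolding last_to_last_def path_labels_def
proof (elim UnE set_prodE UN_E)
  show "w \<in> loops n M \<Longrightarrow> ?thesis"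
    by (rule path_label_loops)
  fix a e' e r k l c m2 m1 u
  assume "w = a * e'" "e' \<in> loops n M" "a = e * r" "e \<in> loops n M" "k \<in> {..<n}" "l \<in> {..<n}"
    "r = c * m2" "c = m1 * u" "u \<in> Collect (path_label n (bypass n M) k l)"
    "m1 \<in> M n k" "m2 \<in> M l n"
  then show ?thesis
    using path_label_bypass path_label_edge[of n "Suc n" k m1 M] path_label_edge[of l "Suc n" n m2 M]
      path_label_loops path_label_append
    by (metis lessI lessThan_iff less_SucI mem_Collect_eq)
qed

lemma loops_mult: "m \<in> M n n \<Longrightarrow> e \<in> loops n M \<Longrightarrow> m * e \<in> loops n M"
  unfolding loops_def by (rule mon_star.step)

lemma one_in_loops: "1 \<in> loops n M"
  unfolding loops_def by (rule mon_star.one)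

lemma bypass_path_label_mult_out_of_last:
  assumes "i < n" "m \<in> M i n" "w \<in> out_of_last n M j"
  shows "path_label n (bypass n M) i j (m * w)"
proof -
  from assms(3) obtain e m' k u where w: "w = e * (m' * u)" and
    "e \<in> loops n M" "k < n" "m' \<in> M n k" "path_label n (bypass n M) k j u"
    unfolding out_of_last_def path_labels_def by (auto elim!: set_prodE)
  moreover from this assms(2) have "m * e * m' \<in> bypass n M i k"
    unfolding bypass_def by (auto intro!: set_prodI)
  ultimately have "path_label n (bypass n M) i j (m * e * m' * u)"
    using assms(1) by (auto intro: path_label.cons)
  then show ?thesis
    by (simp add: w mult.assoc)
qed

lemma loop_mult_out_of_last:
  assumes "m \<in> M n n" "w \<in> out_of_last n M j"
  shows "m * w \<in> out_of_last n M j"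
proof -
  from assms(2) obtain e r where "w = e * r" "e \<in> loops n M"
    "r \<in> (\<Union>k<n. set_prod (*) (M n k) (path_labels n (bypass n M) k j))"
    unfolding out_of_last_def by (elim set_prodE) blast
  with assms(1) show ?thesis
    unfolding out_of_last_def by (metis loops_mult mult.assoc set_prodI)
qed

lemma into_last_mult_last_to_last:
  assumes "i < n" "m \<in> M i n" "w \<in> last_to_last n M"
  shows "m * w \<in> into_last n M i"
proof -
  consider (loop) "w \<in> loops n M"
    | (detour) e k l m1 u m2 e' where "w = e * (m1 * u * m2) * e'"
      "e \<in> loops n M" "e' \<in> loops n M" "k < n" "l < n" "m1 \<in> M n k" "m2 \<in> M l n"
      "path_label n (bypass n M) k l u"
    using assms(3) unfolding last_to_last_def path_labels_def by (auto elim!: set_prodE)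
  then show ?thesis
  proof cases
    case loop
    with assms have "1 * m * w \<in> into_last n M i"
      unfolding into_last_def path_labels_def
      by (intro set_prodI UN_I[of i]) (auto intro: path_label.nil)
    then show ?thesis by simp
  next
    case detour
    with assms(2) have "m * e * m1 \<in> bypass n M i k"
      unfolding bypass_def by (auto intro!: set_prodI)
    with detour assms(1) have "m * e * m1 * u * m2 * e' \<in> into_last n M i"
      unfolding into_last_def path_labels_def
      by (intro set_prodI UN_I[of l]) (auto intro: path_label.cons)
    then show ?thesis
      by (simp add: detour mult.assoc)
  qed
qed

lemma loop_mult_last_to_last:
  assumes "m \<in> M n n" "w \<in> last_to_last n M"
  shows "m * w \<in> last_to_last n M"
proof -
  consider (loop) "w \<in> loops n M"
    | (detour) e r e' where "w = e * r * e'" "e \<in> loops n M" "e' \<in> loops n M"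
      "r \<in> (\<Union>k<n. \<Union>l<n. set_prod (*) (set_prod (*) (M n k) (path_labels n (bypass n M) k l)) (M l n))"
    using assms(2) unfolding last_to_last_def by (elim UnE set_prodE) blast+
  then show ?thesis
  proof cases
    case loop
    with assms(1) show ?thesis
      unfolding last_to_last_def by (simp add: loops_mult)
  next
    case detour
    with assms(1) have "m * e * r * e' \<in> last_to_last n M"
      unfolding last_to_last_def by (intro UnI2 set_prodI loops_mult) auto
    then show ?thesis
      by (simp add: detour mult.assoc)
  qed
qed

lemma path_label_Suc_to_low:
  assumes "path_label (Suc n) M i j w" "j < n"
  shows "(i < n \<longrightarrow> path_label n (bypass n M) i j w) \<and> (i = n \<longrightarrow> w \<in> out_of_last n M j)"
  using assms
proof (induction rule: path_label.induct)
  case (nil i)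
  then show ?case by (auto intro: path_label.nil)
next
  case (cons i k m j w)
  then have IH: "k < n \<longrightarrow> path_label n (bypass n M) k j w" "k = n \<longrightarrow> w \<in> out_of_last n M j"
    by blast+
  show ?case
  proof (intro conjI impI)
    assume "i < n"
    show "path_label n (bypass n M) i j (m * w)"
    proof (cases "k < n")
      case True
      with cons.hyps IH \<open>i < n\<close> show ?thesis
        by (auto simp: bypass_def intro: path_label.cons)
    next
      case False
      with cons.hyps have "k = n" by simp
      with cons.hyps IH \<open>i < n\<close> show ?thesis
        by (auto intro: bypass_path_label_mult_out_of_last)
    qed
  next
    assume "i = n"
    show "m * w \<in> out_of_last n M j"
    proof (cases "k < n")
      case True
      with cons IH \<open>i = n\<close> have "1 * (m * w) \<in> out_of_last n M j"
        unfolding out_of_last_def path_labels_def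
        by (intro set_prodI one_in_loops UN_I[of k]) auto
      then show ?thesis by simp
    next
      case False
      with cons.hyps have "k = n" by simp
      with cons.hyps IH \<open>i = n\<close> show ?thesis
        by (auto intro: loop_mult_out_of_last)
    qed
  qed
qed

lemma path_label_Suc_to_last:
  assumes "path_label (Suc n) M i j w" "j = n"
  shows "(i < n \<longrightarrow> w \<in> into_last n M i) \<and> (i = n \<longrightarrow> w \<in> last_to_last n M)"
  using assms
proof (induction rule: path_label.induct)
  case (nil i)
  then show ?case by (auto simp: last_to_last_def loops_def intro: mon_star.one)
next
  case (cons i k m j w)
  then have IH: "k < n \<longrightarrow> w \<in> into_last n M k" "k = n \<longrightarrow> w \<in> last_to_last n M"
    by blast+
  show ?case
  proof (intro conjI impI)
    assume "i < n"
    show "m * w \<in> into_last n M i"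
    proof (cases "k < n")
      case True
      with IH obtain u k' m' e where w: "w = u * m' * e" and
        "e \<in> loops n M" "k' < n" "m' \<in> M k' n" "path_label n (bypass n M) k k' u"
        unfolding into_last_def path_labels_def by (auto elim!: set_prodE)
      moreover from cons.hyps True \<open>i < n\<close> have "m \<in> bypass n M i k"
        by (auto simp: bypass_def)
      ultimately have "m * u * m' * e \<in> into_last n M i"
        using \<open>i < n\<close> True unfolding into_last_def path_labels_def
        by (intro set_prodI UN_I[of k']) (auto intro: path_label.cons)
      then show ?thesis by (simp add: w mult.assoc)
    next
      case False
      with cons.hyps have "k = n" by simp
      with cons.hyps IH \<open>i < n\<close> show ?thesis
        by (auto intro: into_last_mult_last_to_last)
    qed
  next
    assume "i = n"
    show "m * w \<in> last_to_last n M"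
    proof (cases "k < n")
      case True
      with IH obtain u k' m' e where w: "w = u * m' * e" and
        "e \<in> loops n M" "k' < n" "m' \<in> M k' n" "path_label n (bypass n M) k k' u"
        unfolding into_last_def path_labels_def by (auto elim!: set_prodE)
      with cons.hyps True \<open>i = n\<close> have "1 * (m * u * m') * e \<in> last_to_last n M"
        unfolding last_to_last_def path_labels_def
        by (intro UnI2 set_prodI one_in_loops UN_I[of k] UN_I[of k']) auto
      then show ?thesis by (simp add: w mult.assoc)
    next
      case False
      with cons.hyps have "k = n" by simp
      with cons.hyps IH \<open>i = n\<close> show ?thesis
        by (auto intro: loop_mult_last_to_last)
    qed
  qed
qed

lemma path_labels_Suc:
  assumes "i \<le> n" "j \<le> n"
  shows "path_labels (Suc n) M i j =
    (if i < n \<and> j < n then path_labels n (bypass n M) i j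
     else if i < n then into_last n M i
     else if j < n then out_of_last n M j
     else last_to_last n M)"
  using assms path_label_Suc_to_low[of n M i j] path_label_Suc_to_last[of n M i j]
    path_label_bypass into_last_path_label out_of_last_path_label last_to_last_path_label
  unfolding path_labels_def by (auto simp: le_less)

theorem path_labels_ratset_dsup:
  fixes M :: "'a::R_dioid set mat"
  assumes "\<And>i j. M i j \<in> ratset (*) 1" and "i < n" "j < n"
  shows "path_labels n M i j \<in> ratset (*) 1
    \<and> dsup (path_labels n M i j) = mstar n (\<lambda>i j. dsup (M i j)) i j"
  using assms
proof (induction n arbitrary: M i j)
  case 0
  then show ?case by simp
next
  case (Suc n)
  let ?A = "\<lambda>i j. dsup (M i j)"
  define es where "es = dstar (?A n n)"
  define F where "F = (\<lambda>i j. ?A i j + ?A i n * es * ?A n j)"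
  have loops: "loops n M \<in> ratset (*) 1" "dsup (loops n M) = es"
    using Suc.prems by (simp_all add: loops_def es_def ratset.star dsup_mon_star)
  have bypass: "bypass n M i j \<in> ratset (*) 1" "dsup (bypass n M i j) = F i j" for i j
    using Suc.prems loops by (simp_all add: bypass_def F_def ratset.union ratset.prod dsup_union rat_sup_mult)
  have F_eq: "(\<lambda>i j. dsup (bypass n M i j)) = F"
    using bypass by auto
  have IH: "path_labels n (bypass n M) k l \<in> ratset (*) 1"
    "dsup (path_labels n (bypass n M) k l) = mstar n F k l" if "k < n" "l < n" for k l
    using Suc.IH[of "bypass n M" k l] bypass that by (simp_all add: F_eq)
  show ?case
    using Suc.prems loops IH
    by (simp add: path_labels_Suc Let_def es_def F_def into_last_def out_of_last_def last_to_last_def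
        ratset.union ratset.prod ratset_UN dsup_union rat_sup_mult dsup_UN)
qed

lemma mstar_eq_dsup_path_labels:
  fixes A :: "'a::R_dioid mat"
  assumes "i < n" "j < n"
  shows "path_labels n (\<lambda>i j. {A i j}) i j \<in> ratset (*) 1"
    and "mstar n A i j = dsup (path_labels n (\<lambda>i j. {A i j}) i j)"
  using path_labels_ratset_dsup[of "\<lambda>i j. {A i j}" i n j] assms by simp_all

lemma one_le_mstar:
  fixes A :: "'a::R_dioid mat"
  assumes "i < n"
  shows "dle 1 (mstar n A i i)"
  using assms mstar_eq_dsup_path_labels[of i n i A]
  by (simp add: dsup_upper path_labels_def path_label.nil)

lemma mstar_unfold_le:
  fixes A :: "'a::R_dioid mat"
  assumes "i < n" "k < n" "j < n"
  shows "dle (A i k * mstar n A k j) (mstar n A i j)"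
proof -
  have "dle (A i k * dsup (path_labels n (\<lambda>i j. {A i j}) k j) * 1) (mstar n A i j)"
    using assms mstar_eq_dsup_path_labels[of _ n _ A]
    by (intro mult_dsup_le) (auto simp: path_labels_def intro: dsup_upper path_label.cons)
  then show ?thesis
    using assms mstar_eq_dsup_path_labels[of k n j A] by simp
qed

lemma mstar_induct:
  fixes A N :: "'a::R_dioid mat"
  assumes one: "\<And>i. i < n \<Longrightarrow> dle 1 (N i i)"
    and step: "\<And>i k j. i < n \<Longrightarrow> k < n \<Longrightarrow> j < n \<Longrightarrow> dle (A i k * N k j) (N i j)"
  shows "mle n (mstar n A) N"
  unfolding mle_def
proof (intro allI impI)
  fix i j assume "i < n" "j < n"
  have "dle w (N i j)" if "path_label n (\<lambda>i j. {A i j}) i j w" for w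
    using that
  proof (induction rule: path_label.induct)
    case (nil i)
    then show ?case by (rule one)
  next
    case (cons i k m j w)
    then show ?case
      using step[of i k j] path_label_idx[OF cons.hyps(4)] dle_mult_left dle_trans by fastforce
  qed
  then show "dle (mstar n A i j) (N i j)"
    using \<open>i < n\<close> \<open>j < n\<close> mstar_eq_dsup_path_labels[of i n j A]
    by (auto simp: path_labels_def intro: dsup_least)
qed

lemma mmul_mmul_entry_le:
  fixes A B C :: "'a::dioid mat"
  assumes "k < n" "l < n"
  shows "dle (A i k * B k l * C l m) (mmul n (mmul n A B) C i m)"
proof -
  have "dle (A i k * B k l * C l m) ((\<Sum>k<n. A i k * B k l) * C l m)"
    using assms by (intro dle_mult_right dle_sum) auto
  also have "dle \<dots> (\<Sum>l<n. (\<Sum>k<n. A i k * B k l) * C l m)"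
    using assms by (intro dle_sum) auto
  finally show ?thesis
    by (simp add: mmul_def)
qed

locale bracket_matrices =
  fixes n :: nat and U X V :: "'a::R_dioid mat" and b p d q :: 'a and Z :: "'a set"
  assumes zero_in_Z: "0 \<in> Z" and one_in_Z: "1 \<in> Z"
    and mult_in_Z: "x \<in> Z \<Longrightarrow> y \<in> Z \<Longrightarrow> x * y \<in> Z"
    and Z_commute: "x \<in> Z \<Longrightarrow> c \<in> {b, p, d, q} \<Longrightarrow> x * c = c * x"
    and X_in_Z: "i < n \<Longrightarrow> j < n \<Longrightarrow> X i j \<in> Z"
    and U_cases: "i < n \<Longrightarrow> j < n \<Longrightarrow> U i j \<in> {0, b, p}"
    and V_cases: "i < n \<Longrightarrow> j < n \<Longrightarrow> V i j \<in> {0, d, q}"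
    and bd: "b * d = 1" and pq: "p * q = 1" and bq: "b * q = 0" and pd: "p * d = 0"
begin

lemma U_mult_V_cases: "i < n \<Longrightarrow> k < n \<Longrightarrow> l < n \<Longrightarrow> m < n \<Longrightarrow> U i k * V l m \<in> {0, 1}"
proof -
  assume "i < n" "k < n" "l < n" "m < n"
  then have "U i k = 0 \<or> U i k = b \<or> U i k = p" "V l m = 0 \<or> V l m = d \<or> V l m = q"
    using U_cases[of i k] V_cases[of l m] by auto
  then show ?thesis
    by (elim disjE) (simp_all add: bd pq bq pd)
qed

lemma U_commute: "x \<in> Z \<Longrightarrow> i < n \<Longrightarrow> k < n \<Longrightarrow> x * U i k = U i k * x"
  using U_cases[of i k] Z_commute[of x b] Z_commute[of x p] by auto

lemma matched_brackets:
  assumes "u \<in> Z"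
  shows "U i k * p * u * (q * V l m) = U i k * u * V l m"
proof -
  have "U i k * p * u * (q * V l m) = U i k * (u * p) * q * V l m"
    using Z_commute[OF assms, of p] by (simp add: mult.assoc)
  also have "\<dots> = U i k * u * V l m"
    by (simp add: mult.assoc pq)
  finally show ?thesis .
qed

text \<open>Reading \<open>U i k * p\<close> as an opening and \<open>q * V l m\<close> as a closing bracket, the labels of
  paths through the matrix of letters factor into balanced words, separated first by
  unmatched closing and then by unmatched opening brackets.\<close>

definition letters :: "'a set mat" where
  "letters i j = {U i j * p, X i j, q * V i j}"

inductive balanced :: "nat \<Rightarrow> nat \<Rightarrow> 'a \<Rightarrow> bool" where
  unit: "i < n \<Longrightarrow> balanced i i 1"
| letter: "i < n \<Longrightarrow> k < n \<Longrightarrow> balanced k j x \<Longrightarrow> balanced i j (X i k * x)"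
| nest: "i < n \<Longrightarrow> k < n \<Longrightarrow> l < n \<Longrightarrow> m < n \<Longrightarrow> balanced k l u \<Longrightarrow> balanced m j x \<Longrightarrow>
    balanced i j (U i k * p * u * (q * V l m) * x)"

inductive opens_only :: "nat \<Rightarrow> nat \<Rightarrow> 'a \<Rightarrow> bool" where
  base: "balanced i j x \<Longrightarrow> opens_only i j x"
| step: "balanced i k x \<Longrightarrow> k < n \<Longrightarrow> l < n \<Longrightarrow> opens_only l j w \<Longrightarrow> opens_only i j (x * (U k l * p) * w)"

inductive closes_opens :: "nat \<Rightarrow> nat \<Rightarrow> 'a \<Rightarrow> bool" where
  base: "opens_only i j w \<Longrightarrow> closes_opens i j w"
| step: "balanced i k x \<Longrightarrow> k < n \<Longrightarrow> l < n \<Longrightarrow> closes_opens l j w \<Longrightarrow>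
    closes_opens i j (x * (q * V k l) * w)"

lemma balanced_idx: "balanced i j x \<Longrightarrow> i < n \<and> j < n"
  by (induction rule: balanced.induct) auto

lemma balanced_in_Z: "balanced i j x \<Longrightarrow> x \<in> Z"
proof (induction rule: balanced.induct)
  case (unit i)
  show ?case by (rule one_in_Z)
next
  case (letter i k j x)
  then show ?case by (intro mult_in_Z X_in_Z)
next
  case (nest i k l m u j x)
  have "U i k * V l m \<in> Z"
    using U_mult_V_cases[OF nest.hyps(1-4)] zero_in_Z one_in_Z by auto
  moreover have "U i k * p * u * (q * V l m) = u * (U i k * V l m)"
    using matched_brackets[OF nest.IH(1)] U_commute[OF nest.IH(1) nest.hyps(1,2)]
    by (metis mult.assoc)
  ultimately show ?case
    using nest by (auto intro!: mult_in_Z)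
qed

lemma balanced_commute: "balanced i j x \<Longrightarrow> c \<in> {b, p, d, q} \<Longrightarrow> x * c = c * x"
  using balanced_in_Z Z_commute by blast

lemma balanced_append: "balanced a c u \<Longrightarrow> balanced c e v \<Longrightarrow> balanced a e (u * v)"
proof (induction arbitrary: v rule: balanced.induct)
  case (unit i)
  then show ?case by simp
next
  case (letter i k j x)
  then show ?case by (auto simp: mult.assoc intro: balanced.letter)
next
  case (nest i k l m u j x)
  then have "balanced i e (U i k * p * u * (q * V l m) * (x * v))"
    by (intro balanced.nest) auto
  then show ?case by (simp add: mult.assoc)
qed

lemma balanced_opens_only:
  assumes "balanced i k u" "opens_only k j w"
  shows "opens_only i j (u * w)"
  using assms(2)
proof cases
  case base
  then show ?thesis
    using assms(1) by (auto intro: opens_only.base balanced_append)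
next
  case (step k' x l w')
  with assms(1) have "opens_only i j (u * x * (U k' l * p) * w')"
    by (intro opens_only.step balanced_append) auto
  then show ?thesis
    using step by (simp add: mult.assoc)
qed

lemma balanced_closes_opens:
  assumes "balanced i k u" "closes_opens k j w"
  shows "closes_opens i j (u * w)"
  using assms(2)
proof cases
  case base
  then show ?thesis
    using assms(1) by (auto intro: closes_opens.base balanced_opens_only)
next
  case (step k' x l w')
  with assms(1) have "closes_opens i j (u * x * (q * V k' l) * w')"
    by (intro closes_opens.step balanced_append) auto
  then show ?thesis
    using step by (simp add: mult.assoc)
qed

lemma path_label_closes_opens: "path_label n letters i j w \<Longrightarrow> closes_opens i j w"
proof (induction rule: path_label.induct)
  case (nil i)
  then show ?case
    by (intro closes_opens.base opens_only.base balanced.unit)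
next
  case (cons i k m j w)
  from cons.hyps(3) consider "m = U i k * p" | "m = X i k" | "m = q * V i k"
    unfolding letters_def by auto
  then show ?case
  proof cases
    case 1
    from cons.IH show ?thesis
    proof cases
      case base
      with cons.hyps have "opens_only i j (1 * (U i k * p) * w)"
        by (intro opens_only.step balanced.unit) auto
      then show ?thesis
        using 1 by (auto intro: closes_opens.base)
    next
      case (step k' x l w')
      with cons.hyps have "balanced i l (U i k * p * x * (q * V k' l) * 1)"
        by (intro balanced.nest balanced.unit) auto
      then have "closes_opens i j (U i k * p * x * (q * V k' l) * 1 * w')"
        using step by (intro balanced_closes_opens)
      then show ?thesis
        using 1 step by (simp add: mult.assoc)
    qed
  next
    case 2
    with cons have "balanced i k (X i k * 1)"
      by (intro balanced.letter balanced.unit) auto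
    then show ?thesis
      using 2 cons.IH balanced_closes_opens by fastforce
  next
    case 3
    with cons have "closes_opens i j (1 * (q * V i k) * w)"
      by (intro closes_opens.step balanced.unit) auto
    then show ?thesis
      using 3 by simp
  qed
qed

lemma balanced_path_label: "balanced i j x \<Longrightarrow> path_label n letters i j x"
proof (induction rule: balanced.induct)
  case (unit i)
  then show ?case by (rule path_label.nil)
next
  case (letter i k j x)
  then show ?case by (intro path_label.cons) (auto simp: letters_def)
next
  case (nest i k l m u j x)
  have "path_label n letters i k (U i k * p)" "path_label n letters l m (q * V l m)"
    using nest.hyps by (auto intro: path_label_edge simp: letters_def)
  then show ?case
    using nest.IH path_label_append by metis
qed

lemma balanced_sandwich:
  assumes "balanced i j x"
  shows "b * x * d = x"
proof -
  have "b * x * d = x * b * d"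
    using balanced_commute[OF assms, of b] by simp
  also have "\<dots> = x"
    by (simp add: mult.assoc bd)
  finally show ?thesis .
qed

lemma opens_only_sandwich: "opens_only i j w \<Longrightarrow> p * w * d = 0"
proof (induction rule: opens_only.induct)
  case (base i j x)
  have "p * x * d = x * (p * d)"
    using balanced_commute[OF base, of p]
    by (simp only: eq_commute[of "x * p"]) (simp add: mult.assoc)
  then show ?case by (simp add: pd)
next
  case (step i k x l j w)
  have "p * (x * (U k l * p) * w) * d = p * x * U k l * (p * w * d)"
    by (simp add: mult.assoc)
  then show ?case
    using step.IH by simp
qed

lemma closes_opens_cases:
  assumes "closes_opens i j w"
  shows "balanced i j w \<or> b * w * d = 0"
  using assms
proof cases
  case base
  then show ?thesis
  proof cases
    case base
    then show ?thesis by simp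
  next
    case (step k x l w')
    then have "b * w * d = b * x * U k l * (p * w' * d)"
      by (simp add: mult.assoc)
    then show ?thesis
      using opens_only_sandwich \<open>opens_only l j w'\<close> by simp
  qed
next
  case (step k x l w')
  have "b * w * d = b * x * q * V k l * w' * d"
    by (simp add: step mult.assoc)
  also have "\<dots> = x * (b * q) * V k l * w' * d"
    using balanced_commute[OF \<open>balanced i k x\<close>, of b]
    by (simp only: eq_commute[of "x * b"]) (simp add: mult.assoc)
  finally show ?thesis
    by (simp add: bq)
qed

definition Msum :: "'a mat" where
  "Msum = madd (madd (rscal U p) X) (lscal q V)"

definition Nsol :: "'a mat" where
  "Nsol = lscal b (rscal (mstar n Msum) d)"

lemma path_labels_letters:
  assumes "i < n" "j < n"
  shows "path_labels n letters i j \<in> ratset (*) 1"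
    and "Nsol i j = b * dsup (path_labels n letters i j) * d"
proof -
  have "letters i j \<in> ratset (*) 1" for i j
    by (simp add: letters_def ratset.fin)
  moreover have "(\<lambda>i j. dsup (letters i j)) = Msum"
    by (auto simp: letters_def Msum_def madd_def rscal_def lscal_def dsup_insert ratset.fin add.assoc)
  ultimately show "path_labels n letters i j \<in> ratset (*) 1"
    and "Nsol i j = b * dsup (path_labels n letters i j) * d"
    using path_labels_ratset_dsup[of letters i n j] assms
    by (simp_all add: Nsol_def lscal_def rscal_def mult.assoc)
qed

lemma balanced_le_Nsol:
  assumes "balanced i j x"
  shows "dle x (Nsol i j)"
proof -
  have "i < n" "j < n"
    using balanced_idx[OF assms] by auto
  then have "dle (b * x * d) (b * dsup (path_labels n letters i j) * d)"
    using assms path_labels_letters(1)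
    by (intro dle_mult_left dle_mult_right dsup_upper) (auto simp: path_labels_def balanced_path_label)
  then show ?thesis
    using assms \<open>i < n\<close> \<open>j < n\<close> by (simp add: balanced_sandwich path_labels_letters(2))
qed

lemma mult_Nsol_le:
  assumes "i < n" "j < n" and le: "\<And>x. balanced i j x \<Longrightarrow> dle (a * x * c) z"
  shows "dle (a * Nsol i j * c) z"
proof -
  have "a * Nsol i j * c = (a * b) * dsup (path_labels n letters i j) * (d * c)"
    using assms by (simp add: path_labels_letters(2) mult.assoc)
  also have "dle \<dots> z"
  proof (rule mult_dsup_le[OF path_labels_letters(1)[OF assms(1,2)]])
    fix w
    assume "w \<in> path_labels n letters i j"
    then have "balanced i j w \<or> b * w * d = 0"
      by (simp add: path_labels_def closes_opens_cases path_label_closes_opens)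
    moreover have "a * b * w * (d * c) = a * (b * w * d) * c"
      by (simp add: mult.assoc)
    ultimately show "dle (a * b * w * (d * c)) z"
      using le balanced_sandwich by auto
  qed
  finally show ?thesis .
qed

lemma Nsol_commute:
  assumes comm: "\<And>x. x \<in> Z \<Longrightarrow> x * c = c * x" and "i < n" "j < n"
  shows "Nsol i j * c = c * Nsol i j"
proof -
  let ?W = "set_prod (*) (set_prod (*) {b} (path_labels n letters i j)) {d}"
  have W: "?W \<in> ratset (*) 1"
    using assms path_labels_letters(1) by (intro ratset.prod) auto
  have "Nsol i j = dsup ?W"
    using assms path_labels_letters by (simp add: rat_sup_mult ratset.prod)
  moreover have "dsup ?W * c = c * dsup ?W"
  proof (rule dsup_commute[OF W])
    fix x
    assume "x \<in> ?W"
    then obtain w where "x = b * w * d" "path_label n letters i j w"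
      by (auto simp: set_prod_def path_labels_def)
    then have "x \<in> Z"
      using closes_opens_cases path_label_closes_opens balanced_sandwich balanced_in_Z zero_in_Z
      by metis
    then show "x * c = c * x"
      by (rule comm)
  qed
  ultimately show ?thesis by simp
qed

lemma X_Nsol_le:
  assumes "i < n" "k < n" "j < n"
  shows "dle (X i k * Nsol k j) (Nsol i j)"
  using mult_Nsol_le[of k j "X i k" 1 "Nsol i j"] assms
  by (simp add: balanced_le_Nsol balanced.letter)

lemma U_Nsol_V_Nsol_le:
  assumes "i < n" "k < n" "l < n" "m < n" "j < n"
  shows "dle (U i k * Nsol k l * V l m * Nsol m j) (Nsol i j)"
proof -
  have "dle (U i k * u * V l m * Nsol m j * 1) (Nsol i j)" if u: "balanced k l u" for u
  proof (rule mult_Nsol_le[OF assms(4,5)])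
    fix x
    assume "balanced m j x"
    with assms u have "balanced i j (U i k * p * u * (q * V l m) * x)"
      by (intro balanced.nest)
    then show "dle (U i k * u * V l m * x * 1) (Nsol i j)"
      using balanced_le_Nsol matched_brackets[OF balanced_in_Z[OF u]] by simp
  qed
  then have "dle (U i k * Nsol k l * (V l m * Nsol m j)) (Nsol i j)"
    by (intro mult_Nsol_le[OF assms(2,3)]) (simp add: mult.assoc)
  then show ?thesis
    by (simp add: mult.assoc)
qed

theorem Nsol_solution: "mle n (mstar n (madd (mmul n (mmul n U Nsol) V) X)) Nsol"
proof (rule mstar_induct)
  show "dle 1 (Nsol i i)" if "i < n" for i
    using that by (intro balanced_le_Nsol balanced.unit)
  show "dle (madd (mmul n (mmul n U Nsol) V) X i k * Nsol k j) (Nsol i j)"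
    if "i < n" "k < n" "j < n" for i k j
    using that X_Nsol_le U_Nsol_V_Nsol_le
    by (simp add: madd_def mmul_def distrib_right sum_distrib_right dle_add_iff dle_sum_iff)
qed

lemma balanced_le_mstar_solution:
  fixes y :: "'a mat"
  defines "Y \<equiv> madd (mmul n (mmul n U y) V) X"
  assumes sol: "mle n (mstar n Y) y" and "balanced i j x"
  shows "dle x (mstar n Y i j)"
  using assms(3)
proof (induction rule: balanced.induct)
  case (unit i)
  then show ?case by (rule one_le_mstar)
next
  case (letter i k j x)
  have "dle (X i k * x) (Y i k * mstar n Y k j)"
    using letter.IH by (intro dle_mult) (simp_all add: Y_def madd_def dle_add2)
  also have "dle \<dots> (mstar n Y i j)"
    using letter.hyps balanced_idx by (intro mstar_unfold_le) auto
  finally show ?case .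
next
  case (nest i k l m u j x)
  have "dle u (y k l)"
    using nest.IH(1) sol nest.hyps(2,3) unfolding mle_def by (blast intro: dle_trans)
  then have "dle (U i k * u * V l m) (U i k * y k l * V l m)"
    by (intro dle_mult_left dle_mult_right)
  also have "dle \<dots> (mmul n (mmul n U y) V i m)"
    using nest.hyps by (intro mmul_mmul_entry_le)
  also have "dle \<dots> (Y i m)"
    by (simp add: Y_def madd_def dle_add1)
  finally have "dle (U i k * u * V l m * x) (Y i m * mstar n Y m j)"
    using nest.IH(2) by (rule dle_mult)
  also have "dle \<dots> (mstar n Y i j)"
    using nest.hyps balanced_idx by (intro mstar_unfold_le) auto
  finally show ?case
    using matched_brackets[OF balanced_in_Z[OF nest.hyps(5)]] by simp
qed

theorem Nsol_least:
  assumes sol: "mle n (mstar n (madd (mmul n (mmul n U y) V) X)) y"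
  shows "mle n Nsol y"
  unfolding mle_def
proof (intro allI impI)
  fix i j
  assume "i < n" "j < n"
  moreover have "dle x (y i j)" if "balanced i j x" for x
    using balanced_le_mstar_solution[OF sol that] sol balanced_idx[OF that]
    unfolding mle_def by (blast intro: dle_trans)
  ultimately have "dle (1 * Nsol i j * 1) (y i j)"
    by (intro mult_Nsol_le) simp_all
  then show "dle (Nsol i j) (y i j)"
    by simp
qed

end

lemma singleton_RegLang [simp]: "{[c]} \<in> RegLang"
  by (simp add: RegLang_def)

lemma C2_morph_relation:
  assumes g: "C2_morph g" and r: "({[x, y]}, R) \<in> C2_gens"
  shows "g {[x]} * g {[y]} = g R"
proof -
  have "lconc {[x]} {[y]} = {[x, y]}"
    unfolding lconc_def by auto
  moreover have "g (lconc {[x]} {[y]}) = g {[x]} * g {[y]}"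
    using g singleton_RegLang unfolding C2_morph_def by blast
  moreover have "({[x, y]}, R) \<in> rho"
    using r unfolding rho_def by blast
  then have "g {[x, y]} = g R"
    using g unfolding C2_morph_def by blast
  ultimately show ?thesis
    by simp
qed

lemma C2_morph_relations:
  assumes "C2_morph g"
  shows "g {[B]} * g {[D]} = 1" "g {[P]} * g {[Q]} = 1" "g {[B]} * g {[Q]} = 0" "g {[P]} * g {[D]} = 0"
  using assms C2_morph_relation[OF assms] by (simp_all add: C2_morph_def C2_gens_def)

lemma ZC_mult:
  assumes "x \<in> ZC iC" "y \<in> ZC iC"
  shows "x * y \<in> ZC iC"
  unfolding ZC_def
proof (intro CollectI ballI)
  fix A
  assume "A \<in> RegLang"
  with assms have "x * iC A = iC A * x" "y * iC A = iC A * y"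
    unfolding ZC_def by auto
  then show "x * y * iC A = iC A * (x * y)"
    by (metis mult.assoc)
qed

theorem lemma3:
  fixes iK :: "'k::R_dioid \<Rightarrow> 'l::R_dioid" and iC :: "lang \<Rightarrow> 'l"
    and n :: nat and X U V :: "'l mat"
  assumes tensor: "is_R_tensor TYPE('m::R_dioid) iK iC"
    and X: "\<forall>i<n. \<forall>j<n. X i j \<in> ZC iC"
    and U: "\<forall>i<n. \<forall>j<n. U i j \<in> {0, iC {[B]}, iC {[P]}}"
    and V: "\<forall>i<n. \<forall>j<n. V i j \<in> {0, iC {[D]}, iC {[Q]}}"
  shows "let b = iC {[B]}; p = iC {[P]}; d = iC {[D]}; q = iC {[Q]};
             N = lscal b (rscal (mstar n (madd (madd (rscal U p) X) (lscal q V))) d)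
         in mle n (mstar n (madd (mmul n (mmul n U N) V) X)) N
            \<and> (\<forall>y. mle n (mstar n (madd (mmul n (mmul n U y) V) X)) y \<longrightarrow> mle n N y)
            \<and> (\<forall>i<n. \<forall>j<n. N i j \<in> ZC iC)"
proof -
  have "C2_morph iC"
    using tensor unfolding is_R_tensor_def by blast
  note relations = C2_morph_relations[OF this]
  have ZC_commute: "x * iC {[c]} = iC {[c]} * x" if "x \<in> ZC iC" for x c
    using that unfolding ZC_def by simp
  interpret bracket_matrices n U X V "iC {[B]}" "iC {[P]}" "iC {[D]}" "iC {[Q]}" "ZC iC"
  proof unfold_locales
    show "0 \<in> ZC iC" "1 \<in> ZC iC"
      by (simp_all add: ZC_def)
  qed (use X U V relations ZC_commute ZC_mult in auto)
  have "Nsol i j \<in> ZC iC" if "i < n" "j < n" for i j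
    using Nsol_commute that unfolding ZC_def by blast
  then show ?thesis
    using Nsol_solution Nsol_least unfolding Let_def Nsol_def Msum_def by blast
qed

end
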